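(* Consider the setting described in the context (linear problem, Gauss–Radau collocation nodes, $L$ time steps, arbitrary lower-triangular preconditioner $\mathbf{Q}_\Delta$). Then the smoother of PFASST converges if the CFL number $\mu$ is small enough. More precisely, there exist a fixed value $\mu^*_{S,0}>0$ and a constant $c>0$ independent of $\mu$ such that for all $0<\mu<\mu^*_{S,0}$, $$\rho\big(\mathbf{T}_S(\mu)\big)\le c\,\mu^{1/L},$$ where $\mathbf{T}_S(\mu)=\mathbf{I}_{LMN}-\hat{\mathbf{P}}^{-1}\mathbf{C}$ and $\rho$ denotes the spectral radius.
   Context: Fix positive integers $L$ (number of time steps), $M$ (number of collocation nodes) and $N$ (number of spatial degrees of freedom). Let $0<\tau_1<\dots<\tau_M=1$ be the (right) Gauss–Radau nodes on $[0,1]$, $\ell_j$ the associated Lagrange basis polynomials, and $\mathbf{Q}=(q_{m,j})\in\mathbb{R}^{M\times M}$ with $q_{m,j}=\int_0^{\tau_m}\ell_j(s)\,ds$ (collocation matrix). Let $\mathbf{Q}_\Delta\in\mathbb{R}^{M\times M}$ be the lower-triangular weight matrix of a simpler quadrature rule (the SDC preconditioner). Let $\mathbf{A}\in\mathbb{C}^{N\times N}$ (spatial matrix) and $\mu>0$ (CFL number). Let $\mathbf{N}_M\in\mathbb{R}^{M\times M}$ have all entries of its last column equal to $1$ and all other entries $0$, let $\mathbf{H}=\mathbf{N}_M\otimes\mathbf{I}_N$, and let $\mathbf{E}\in\mathbb{R}^{L\times L}$ have ones on the first subdiagonal and zeros elsewhere. The composite collocation matrix is $\mathbf{C}=\mathbf{I}_{LMN}-\mu\,\mathbf{I}_L\otimes\mathbf{Q}\otimes\mathbf{A}-\mathbf{E}\otimes\mathbf{H}$.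 The fine-level approximative block Jacobi preconditioner is $\hat{\mathbf{P}}=\mathbf{I}_{LMN}-\mu\,\mathbf{I}_L\otimes\mathbf{Q}_\Delta\otimes\mathbf{A}$, assumed invertible, and the smoother's iteration matrix is $\mathbf{T}_S(\mu)=\mathbf{I}_{LMN}-\hat{\mathbf{P}}^{-1}\mathbf{C}$. *)

theory Defs
  imports "HOL-Analysis.Analysis" "Jordan_Normal_Form.Spectral_Radius"
    "Jordan_Normal_Form.Gauss_Jordan_Elimination"
begin

definition kron :: "'a::times mat \<Rightarrow> 'a mat \<Rightarrow> 'a mat" where
  "kron X Y = mat (dim_row X * dim_row Y) (dim_col X * dim_col Y)
     (\<lambda>(i,j). X $$ (i div dim_row Y, j div dim_col Y) * Y $$ (i mod dim_row Y, j mod dim_col Y))"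

(* Right Gauss-Radau nodes 0 < tau_0 < ... < tau_{M-1} = 1 on [0,1] (0-based indices):
   the M-point rule with the fixed node 1 and maximal degree of exactness 2M-2. *)
definition gauss_radau_right :: "nat \<Rightarrow> (nat \<Rightarrow> real) \<Rightarrow> bool" where
  "gauss_radau_right M \<tau> \<longleftrightarrow> 0 < M \<and> 0 < \<tau> 0 \<and> (\<forall>i j. i < j \<and> j < M \<longrightarrow> \<tau> i < \<tau> j) \<and>
     \<tau> (M - 1) = 1 \<and>
     (\<exists>w :: nat \<Rightarrow> real. \<forall>k \<le> 2 * M - 2. (\<Sum>j<M. w j * \<tau> j ^ k) = 1 / real (k + 1))"

definition lagrange_basis :: "nat \<Rightarrow> (nat \<Rightarrow> real) \<Rightarrow> nat \<Rightarrow> real \<Rightarrow> real" where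
  "lagrange_basis M \<tau> j s = (\<Prod>k\<in>{..<M} - {j}. (s - \<tau> k) / (\<tau> j - \<tau> k))"

definition coll_Q :: "nat \<Rightarrow> (nat \<Rightarrow> real) \<Rightarrow> real mat" where
  "coll_Q M \<tau> = mat M M (\<lambda>(m,j). integral {0..\<tau> m} (lagrange_basis M \<tau> j))"

definition N_mat :: "nat \<Rightarrow> complex mat" where
  "N_mat M = mat M M (\<lambda>(i,j). if j = M - 1 then 1 else 0)"

definition E_mat :: "nat \<Rightarrow> complex mat" where
  "E_mat L = mat L L (\<lambda>(i,j). if i = j + 1 then 1 else 0)"

definition cmat_of :: "real mat \<Rightarrow> complex mat" where
  "cmat_of X = map_mat complex_of_real X"

definition C_mat :: "nat \<Rightarrow> nat \<Rightarrow> nat \<Rightarrow> (nat \<Rightarrow> real) \<Rightarrow> complex mat \<Rightarrow> real \<Rightarrow> complex mat" where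
  "C_mat L M N \<tau> A \<mu> = 1\<^sub>m (L*M*N)
     - complex_of_real \<mu> \<cdot>\<^sub>m kron (kron (1\<^sub>m L) (cmat_of (coll_Q M \<tau>))) A
     - kron (E_mat L) (kron (N_mat M) (1\<^sub>m N))"

definition P_hat :: "nat \<Rightarrow> nat \<Rightarrow> nat \<Rightarrow> real mat \<Rightarrow> complex mat \<Rightarrow> real \<Rightarrow> complex mat" where
  "P_hat L M N QD A \<mu> = 1\<^sub>m (L*M*N)
     - complex_of_real \<mu> \<cdot>\<^sub>m kron (kron (1\<^sub>m L) (cmat_of QD)) A"

definition T_S :: "nat \<Rightarrow> nat \<Rightarrow> nat \<Rightarrow> (nat \<Rightarrow> real) \<Rightarrow> real mat \<Rightarrow> complex mat \<Rightarrow> real \<Rightarrow> complex mat" where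
  "T_S L M N \<tau> QD A \<mu> = 1\<^sub>m (L*M*N)
     - the (mat_inverse (P_hat L M N QD A \<mu>)) * C_mat L M N \<tau> A \<mu>"

end

theory Submission
  imports Defs
begin

text \<open>In the \<open>L\<close> time-step blocks of size \<open>MN\<close>, \<open>T\<^sub>S(\<mu>) = P\<^sup>-\<^sup>1(\<mu>(I\<^sub>L \<otimes> (Q - Q\<^sub>\<Delta>) \<otimes> A) + E \<otimes> H)\<close>
  with \<open>P\<close> block diagonal and the coupling \<open>E \<otimes> H\<close> strictly block lower triangular.
  So for an eigenvector only its first nonvanishing time block matters, where the eigenvalue
  equation reads \<open>\<lambda>v = \<mu>(Q - Q\<^sub>\<Delta>)v + \<lambda>\<mu>Q\<^sub>\<Delta>v\<close> blockwise; comparing the largest entry there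
  gives \<open>|\<lambda>| \<le> 2\<mu>\<parallel>I\<^sub>L \<otimes> (Q - Q\<^sub>\<Delta>) \<otimes> A\<parallel>\<close> once \<open>\<mu>\<parallel>I\<^sub>L \<otimes> Q\<^sub>\<Delta> \<otimes> A\<parallel> \<le> 1/2\<close>
  (entrywise 1-norms). Hence \<open>\<rho>(T\<^sub>S(\<mu>)) = O(\<mu>)\<close>, which is stronger than the claimed
  \<open>O(\<mu>\<^bsup>1/L\<^esup>)\<close> for \<open>\<mu> \<le> 1\<close>.\<close>

lemma kron_dims [simp]:
  "dim_row (kron X Y) = dim_row X * dim_row Y" "dim_col (kron X Y) = dim_col X * dim_col Y"
  by (simp_all add: kron_def)

lemma index_kron [simp]:
  "i < dim_row X * dim_row Y \<Longrightarrow> j < dim_col X * dim_col Y \<Longrightarrow>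
   kron X Y $$ (i,j) = X $$ (i div dim_row Y, j div dim_col Y) * Y $$ (i mod dim_row Y, j mod dim_col Y)"
  by (simp add: kron_def)

lemma kron_carrier_mat:
  "X \<in> carrier_mat a b \<Longrightarrow> Y \<in> carrier_mat c d \<Longrightarrow> kron X Y \<in> carrier_mat (a*c) (b*d)"
  unfolding carrier_mat_def by simp

definition block_lower :: "(nat \<Rightarrow> nat) \<Rightarrow> 'a :: zero mat \<Rightarrow> bool" where
  "block_lower blk X \<longleftrightarrow> (\<forall>i<dim_row X. \<forall>j<dim_col X. X $$ (i,j) \<noteq> 0 \<longrightarrow> blk j \<le> blk i)"

definition block_strictly_lower :: "(nat \<Rightarrow> nat) \<Rightarrow> 'a :: zero mat \<Rightarrow> bool" where
  "block_strictly_lower blk X \<longleftrightarrow> (\<forall>i<dim_row X. \<forall>j<dim_col X. X $$ (i,j) \<noteq> 0 \<longrightarrow> blk j < blk i)"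

lemma block_lower_minus:
  fixes X Y :: "'a :: ab_group_add mat"
  assumes "X \<in> carrier_mat m n" "Y \<in> carrier_mat m n" "block_lower blk X" "block_lower blk Y"
  shows "block_lower blk (X - Y)"
  unfolding block_lower_def
proof (intro allI impI)
  fix i j
  assume "i < dim_row (X - Y)" "j < dim_col (X - Y)" "(X - Y) $$ (i,j) \<noteq> 0"
  with assms(1,2) have "i < m" "j < n" "X $$ (i,j) \<noteq> 0 \<or> Y $$ (i,j) \<noteq> 0"
    by auto
  with assms show "blk j \<le> blk i"
    by (auto simp: block_lower_def)
qed

definition diag_kron :: "nat \<Rightarrow> real mat \<Rightarrow> complex mat \<Rightarrow> complex mat" where
  "diag_kron L X A = kron (kron (1\<^sub>m L) (cmat_of X)) A"

lemma diag_kron_carrier_mat: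
  assumes "X \<in> carrier_mat M M" and "A \<in> carrier_mat N N"
  shows "diag_kron L X A \<in> carrier_mat (L*M*N) (L*M*N)"
proof -
  have "cmat_of X \<in> carrier_mat M M"
    using assms(1) by (simp add: cmat_of_def)
  from kron_carrier_mat[OF kron_carrier_mat[OF one_carrier_mat this] assms(2)] show ?thesis
    by (simp add: diag_kron_def)
qed

lemma block_lower_diag_kron:
  assumes X: "X \<in> carrier_mat M M" and A: "A \<in> carrier_mat N N"
  shows "block_lower (\<lambda>i. i div (M*N)) (diag_kron L X A)"
  unfolding block_lower_def
proof (intro allI impI)
  fix i j
  assume "i < dim_row (diag_kron L X A)" "j < dim_col (diag_kron L X A)"
  then have i: "i < L*M*N" and j: "j < L*M*N"
    using diag_kron_carrier_mat[OF X A, of L] by auto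
  assume nz: "diag_kron L X A $$ (i,j) \<noteq> 0"
  have "i div N < L*M" "j div N < L*M"
    using i j by (metis less_mult_imp_div_less)+
  moreover from nz have "kron (1\<^sub>m L) (cmat_of X) $$ (i div N, j div N) \<noteq> 0"
    using X A i j by (auto simp: diag_kron_def cmat_of_def)
  ultimately have "(1\<^sub>m L :: complex mat) $$ (i div N div M, j div N div M) \<noteq> 0"
    using X by (auto simp: cmat_of_def)
  moreover have "i div N div M < L" "j div N div M < L"
    using \<open>i div N < L*M\<close> \<open>j div N < L*M\<close> by (metis less_mult_imp_div_less)+
  ultimately have "i div N div M = j div N div M"
    by (auto split: if_splits)
  then show "j div (M*N) \<le> i div (M*N)"
    by (metis div_mult2_eq mult.commute order_refl)
qed

lemma block_strictly_lower_kron_E_mat: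
  assumes Y: "Y \<in> carrier_mat m m"
  shows "block_strictly_lower (\<lambda>i. i div m) (kron (E_mat L) Y)"
  unfolding block_strictly_lower_def
proof (intro allI impI)
  fix i j
  assume "i < dim_row (kron (E_mat L) Y)" "j < dim_col (kron (E_mat L) Y)"
  then have i: "i < L*m" and j: "j < L*m"
    using Y by (auto simp: E_mat_def)
  assume nz: "kron (E_mat L) Y $$ (i,j) \<noteq> 0"
  have "i div m < L" "j div m < L"
    using i j by (metis less_mult_imp_div_less)+
  moreover from nz have "E_mat L $$ (i div m, j div m) \<noteq> 0"
    using Y i j by (auto simp: E_mat_def)
  ultimately show "j div m < i div m"
    by (auto simp: E_mat_def split: if_splits)
qed

definition entry_norm1 :: "'a :: real_normed_vector mat \<Rightarrow> real" where
  "entry_norm1 X = (\<Sum>i<dim_row X. \<Sum>j<dim_col X. norm (X $$ (i,j)))"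

lemma entry_norm1_nonneg: "0 \<le> entry_norm1 X"
  by (auto simp: entry_norm1_def intro!: sum_nonneg)

lemma row_norm1_le_entry_norm1:
  "i < dim_row X \<Longrightarrow> (\<Sum>j<dim_col X. norm (X $$ (i,j))) \<le> entry_norm1 X"
  unfolding entry_norm1_def
  by (rule member_le_sum[of i "{..<dim_row X}" "\<lambda>i. \<Sum>j<dim_col X. norm (X $$ (i,j))"])
     (auto intro: sum_nonneg)

lemma index_mult_mat_vec_sum:
  "X \<in> carrier_mat m n \<Longrightarrow> v \<in> carrier_vec n \<Longrightarrow> i < m \<Longrightarrow>
   (X *\<^sub>v v) $ i = (\<Sum>j<n. X $$ (i,j) * v $ j)"
  by (auto simp: scalar_prod_def atLeast0LessThan intro!: sum.cong)

lemma norm_mult_mat_vec_index_le: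
  fixes X :: "'a :: real_normed_field mat"
  assumes X: "X \<in> carrier_mat m n" and v: "v \<in> carrier_vec n" and i: "i < m" and "0 \<le> a"
    and bound: "\<And>j. j < n \<Longrightarrow> X $$ (i,j) \<noteq> 0 \<Longrightarrow> v $ j \<noteq> 0 \<Longrightarrow> norm (v $ j) \<le> a"
  shows "norm ((X *\<^sub>v v) $ i) \<le> a * (\<Sum>j<n. norm (X $$ (i,j)))"
proof -
  have "norm (X $$ (i,j) * v $ j) \<le> norm (X $$ (i,j)) * a" if "j < n" for j
    using bound[OF that] \<open>0 \<le> a\<close> by (cases "X $$ (i,j) = 0 \<or> v $ j = 0") (auto simp: norm_mult mult_left_mono)
  then have "(\<Sum>j<n. norm (X $$ (i,j) * v $ j)) \<le> (\<Sum>j<n. norm (X $$ (i,j)) * a)"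
    by (intro sum_mono) auto
  then show ?thesis
    unfolding index_mult_mat_vec_sum[OF X v i]
    by (metis (no_types) norm_sum order_trans sum_distrib_right mult.commute)
qed

lemma leading_block_max_entry:
  fixes v :: "'a :: real_normed_vector vec" and blk :: "nat \<Rightarrow> nat"
  assumes v: "v \<in> carrier_vec n" "v \<noteq> 0\<^sub>v n"
  obtains i0 where "i0 < n" "v $ i0 \<noteq> 0"
    "\<And>j. j < n \<Longrightarrow> blk j < blk i0 \<Longrightarrow> v $ j = 0"
    "\<And>j. j < n \<Longrightarrow> blk j = blk i0 \<Longrightarrow> norm (v $ j) \<le> norm (v $ i0)"
proof -
  define supp where "supp = {j. j < n \<and> v $ j \<noteq> 0}"
  have "supp \<noteq> {}"
    using v by (auto simp: supp_def intro!: eq_vecI)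
  define b0 where "b0 = Min (blk ` supp)"
  define lead where "lead = {j. j < n \<and> blk j = b0}"
  have "b0 \<in> blk ` supp"
    unfolding b0_def using \<open>supp \<noteq> {}\<close> by (intro Min_in) (auto simp: supp_def)
  then have "lead \<noteq> {}"
    by (auto simp: lead_def supp_def)
  moreover have "finite lead"
    by (simp add: lead_def)
  ultimately obtain i0 where i0: "i0 \<in> lead" and i0_max: "Max ((\<lambda>j. norm (v $ j)) ` lead) = norm (v $ i0)"
    by (metis obtains_MAX)
  have max: "norm (v $ j) \<le> norm (v $ i0)" if "j \<in> lead" for j
    using \<open>finite lead\<close> that i0_max by (metis Max_ge finite_imageI image_eqI)
  have below: "v $ j = 0" if "j < n" "blk j < b0" for j
    using that \<open>finite lead\<close> Min_le[of "blk ` supp" "blk j"] unfolding b0_def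
    by (fastforce simp: supp_def)
  from \<open>b0 \<in> blk ` supp\<close> obtain j0 where "j0 \<in> supp" "blk j0 = b0" by auto
  then have "v $ i0 \<noteq> 0"
    using max[of j0] by (auto simp: supp_def lead_def)
  then show ?thesis
    using that i0 max below by (auto simp: lead_def)
qed

text \<open>Evaluated at the largest entry of the first block on which \<open>v\<close> does not vanish, the
  strictly lower part \<open>G\<close> contributes nothing.\<close>

lemma eigenvalue_bound_block_lower_triangular:
  fixes G R K :: "'a :: real_normed_field mat" and blk :: "nat \<Rightarrow> nat"
  assumes carrier: "G \<in> carrier_mat n n" "R \<in> carrier_mat n n" "K \<in> carrier_mat n n"
    and v: "v \<in> carrier_vec n" "v \<noteq> 0\<^sub>v n" and "0 \<le> \<mu>"
    and "block_strictly_lower blk G" "block_lower blk R" "block_lower blk K"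
    and eig: "lam \<cdot>\<^sub>v v = G *\<^sub>v v + of_real \<mu> \<cdot>\<^sub>v (R *\<^sub>v v) + (lam * of_real \<mu>) \<cdot>\<^sub>v (K *\<^sub>v v)"
  shows "norm lam \<le> \<mu> * entry_norm1 R + norm lam * \<mu> * entry_norm1 K"
proof -
  obtain i0 where i0: "i0 < n" "v $ i0 \<noteq> 0"
    and before: "\<And>j. j < n \<Longrightarrow> blk j < blk i0 \<Longrightarrow> v $ j = 0"
    and within: "\<And>j. j < n \<Longrightarrow> blk j = blk i0 \<Longrightarrow> norm (v $ j) \<le> norm (v $ i0)"
    using leading_block_max_entry[where blk = blk, OF v] by blast
  have G_row: "blk j < blk i0" if "j < n" "G $$ (i0,j) \<noteq> 0" for j
    using \<open>block_strictly_lower blk G\<close> carrier(1) i0(1) that by (auto simp: block_strictly_lower_def)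
  have R_row: "blk j \<le> blk i0" if "j < n" "R $$ (i0,j) \<noteq> 0" for j
    using \<open>block_lower blk R\<close> carrier(2) i0(1) that by (auto simp: block_lower_def)
  have K_row: "blk j \<le> blk i0" if "j < n" "K $$ (i0,j) \<noteq> 0" for j
    using \<open>block_lower blk K\<close> carrier(3) i0(1) that by (auto simp: block_lower_def)
  define a where "a = norm (v $ i0)"
  have "a > 0"
    using i0 by (simp add: a_def)
  have lower_bound: "norm ((X *\<^sub>v v) $ i0) \<le> a * entry_norm1 X"
    if X: "X \<in> carrier_mat n n" and X_lower: "\<And>j. j < n \<Longrightarrow> X $$ (i0,j) \<noteq> 0 \<Longrightarrow> blk j \<le> blk i0" for X
  proof -
    have "norm ((X *\<^sub>v v) $ i0) \<le> a * (\<Sum>j<n. norm (X $$ (i0,j)))"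
      using X v(1) i0(1) less_imp_le[OF \<open>a > 0\<close>]
      by (rule norm_mult_mat_vec_index_le)
         (metis X_lower before within a_def le_neq_implies_less)
    also have "\<dots> \<le> a * entry_norm1 X"
      using row_norm1_le_entry_norm1[of i0 X] X i0(1) \<open>a > 0\<close> by auto
    finally show ?thesis .
  qed
  have "norm ((G *\<^sub>v v) $ i0) \<le> 0 * (\<Sum>j<n. norm (G $$ (i0,j)))"
    using G_row before
    by (intro norm_mult_mat_vec_index_le[OF carrier(1) v(1) i0(1) order_refl]) blast
  then have "(G *\<^sub>v v) $ i0 = 0"
    by simp
  moreover have "lam * v $ i0 = (G *\<^sub>v v) $ i0 + of_real \<mu> * (R *\<^sub>v v) $ i0 + lam * of_real \<mu> * (K *\<^sub>v v) $ i0"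
    using arg_cong[OF eig, of "\<lambda>w. w $ i0"] carrier v i0 by simp
  ultimately have "norm lam * a = norm (of_real \<mu> * (R *\<^sub>v v) $ i0 + lam * of_real \<mu> * (K *\<^sub>v v) $ i0)"
    by (metis a_def add_0 norm_mult)
  also have "\<dots> \<le> \<mu> * norm ((R *\<^sub>v v) $ i0) + norm lam * \<mu> * norm ((K *\<^sub>v v) $ i0)"
    using norm_triangle_ineq[of "of_real \<mu> * (R *\<^sub>v v) $ i0" "lam * of_real \<mu> * (K *\<^sub>v v) $ i0"] \<open>0 \<le> \<mu>\<close>
    by (simp add: norm_mult)
  also have "\<dots> \<le> \<mu> * (a * entry_norm1 R) + norm lam * \<mu> * (a * entry_norm1 K)"
    using lower_bound[OF carrier(2) R_row] lower_bound[OF carrier(3) K_row] \<open>0 \<le> \<mu>\<close>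
    by (intro add_mono mult_left_mono) auto
  finally have "a * norm lam \<le> a * (\<mu> * entry_norm1 R + norm lam * \<mu> * entry_norm1 K)"
    by (simp add: algebra_simps)
  then show ?thesis
    using \<open>a > 0\<close> by (rule mult_left_le_imp_le)
qed

lemma mult_mat_vec_add_smult:
  fixes X Y :: "'a :: comm_ring_1 mat"
  assumes "X \<in> carrier_mat m n" "Y \<in> carrier_mat m n" "v \<in> carrier_vec n"
  shows "(X + c \<cdot>\<^sub>m Y) *\<^sub>v v = X *\<^sub>v v + c \<cdot>\<^sub>v (Y *\<^sub>v v)"
  using assms
  by (intro eq_vecI)
     (auto simp: index_mult_mat_vec_sum[of _ m n] sum.distrib sum_distrib_left algebra_simps)

lemma the_mat_inverse:
  fixes P :: "'a :: field mat"
  assumes P: "P \<in> carrier_mat n n" and "invertible_mat P"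
  shows "P * the (mat_inverse P) = 1\<^sub>m n" "the (mat_inverse P) \<in> carrier_mat n n"
proof -
  obtain B where B: "P * B = 1\<^sub>m n" "B * P = 1\<^sub>m (dim_row B)"
    using assms unfolding invertible_mat_def inverts_mat_def by auto
  then have "B \<in> carrier_mat n n"
    using P by (metis carrier_matD(1,2) carrier_matI index_mult_mat(2,3) index_one_mat(2,3))
  then have "P \<in> Units (ring_mat TYPE('a) n ())"
    using P B unfolding Units_def ring_mat_simps by (auto simp: carrier_matD)
  then obtain Pi where "mat_inverse P = Some Pi"
    using mat_inverse(1)[OF P, where b = "()"] by (cases "mat_inverse P") auto
  then show "P * the (mat_inverse P) = 1\<^sub>m n" "the (mat_inverse P) \<in> carrier_mat n n"
    using mat_inverse(2)[OF P] by auto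
qed

text \<open>For \<open>P = 1 - \<mu>K\<close> and \<open>C = 1 - \<mu>K\<^sub>Q - G\<close> this is \<open>\<lambda>Pv = (P - C)v\<close>,
  satisfied by every eigenpair of \<open>1 - P\<^sup>-\<^sup>1C\<close>.\<close>

lemma eigen_equation_of_splitting:
  fixes K KQ G Pi :: "'a :: field mat"
  assumes carrier: "K \<in> carrier_mat n n" "KQ \<in> carrier_mat n n" "G \<in> carrier_mat n n" "Pi \<in> carrier_mat n n"
    and inverse: "(1\<^sub>m n - \<mu> \<cdot>\<^sub>m K) * Pi = 1\<^sub>m n"
    and v: "v \<in> carrier_vec n"
    and eig: "(1\<^sub>m n - Pi * (1\<^sub>m n - \<mu> \<cdot>\<^sub>m KQ - G)) *\<^sub>v v = lam \<cdot>\<^sub>v v"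
  shows "lam \<cdot>\<^sub>v v = G *\<^sub>v v + \<mu> \<cdot>\<^sub>v ((KQ - K) *\<^sub>v v) + (lam * \<mu>) \<cdot>\<^sub>v (K *\<^sub>v v)"
proof -
  define P where "P = 1\<^sub>m n - \<mu> \<cdot>\<^sub>m K"
  define C where "C = 1\<^sub>m n - \<mu> \<cdot>\<^sub>m KQ - G"
  have P: "P \<in> carrier_mat n n" and C: "C \<in> carrier_mat n n"
    using carrier by (auto simp: P_def C_def)
  have P_alt: "P = 1\<^sub>m n + (- \<mu>) \<cdot>\<^sub>m K" and PC_alt: "P - C = G + \<mu> \<cdot>\<^sub>m (KQ - K)"
    using carrier by (auto simp: P_def C_def right_diff_distrib intro!: eq_matI)
  have "P * (1\<^sub>m n - Pi * C) = P * 1\<^sub>m n - P * (Pi * C)"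
    using P C carrier(4) by (intro mult_minus_distrib_mat) auto
  also have "P * (Pi * C) = C"
    using P C carrier(4) inverse[folded P_def] by (simp add: assoc_mult_mat[symmetric, of P n n Pi n C n])
  finally have PT: "P * (1\<^sub>m n - Pi * C) = P - C"
    using P by simp
  have "(P - C) *\<^sub>v v = P *\<^sub>v ((1\<^sub>m n - Pi * C) *\<^sub>v v)"
    unfolding PT[symmetric] using P C carrier(4) v by (intro assoc_mult_mat_vec) auto
  also have "\<dots> = lam \<cdot>\<^sub>v (P *\<^sub>v v)"
    using P v eig[folded P_def C_def] by (simp add: mult_mat_vec)
  finally have vec_eq: "G *\<^sub>v v + \<mu> \<cdot>\<^sub>v ((KQ - K) *\<^sub>v v) = lam \<cdot>\<^sub>v (v + (- \<mu>) \<cdot>\<^sub>v (K *\<^sub>v v))"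
    using mult_mat_vec_add_smult[of G n n "KQ - K" v \<mu>] mult_mat_vec_add_smult[of "1\<^sub>m n" n n K v "- \<mu>"]
      carrier v minus_carrier_mat[OF carrier(1), of KQ] by (simp add: PC_alt[symmetric] P_alt[symmetric])
  have "(G *\<^sub>v v) $ i + \<mu> * ((KQ - K) *\<^sub>v v) $ i = lam * (v $ i - \<mu> * (K *\<^sub>v v) $ i)"
    if "i < n" for i
    using arg_cong[OF vec_eq, where f = "\<lambda>w. w $ i"] that carrier v by simp
  then have "lam * v $ i = (G *\<^sub>v v) $ i + \<mu> * ((KQ - K) *\<^sub>v v) $ i + lam * \<mu> * (K *\<^sub>v v) $ i"
    if "i < n" for i
    using that by (simp add: algebra_simps)
  then show ?thesis
    using carrier v by (intro eq_vecI) auto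
qed

lemma spectral_radius_splitting_le:
  fixes K KQ G Pi :: "complex mat" and blk :: "nat \<Rightarrow> nat"
  assumes carrier: "K \<in> carrier_mat n n" "KQ \<in> carrier_mat n n" "G \<in> carrier_mat n n" "Pi \<in> carrier_mat n n"
    and "0 < n" and "0 \<le> \<mu>" and small: "\<mu> * entry_norm1 K \<le> 1/2"
    and inverse: "(1\<^sub>m n - of_real \<mu> \<cdot>\<^sub>m K) * Pi = 1\<^sub>m n"
    and G_blk: "block_strictly_lower blk G" and KQ_blk: "block_lower blk KQ" and K_blk: "block_lower blk K"
  shows "spectral_radius (1\<^sub>m n - Pi * (1\<^sub>m n - of_real \<mu> \<cdot>\<^sub>m KQ - G)) \<le> 2 * \<mu> * entry_norm1 (KQ - K)"
proof -
  let ?T = "1\<^sub>m n - Pi * (1\<^sub>m n - of_real \<mu> \<cdot>\<^sub>m KQ - G)"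
  have T: "?T \<in> carrier_mat n n"
    using carrier by auto
  obtain lam where radius: "spectral_radius ?T = cmod lam" and "eigenvalue ?T lam"
    using spectral_radius_mem_max(1)[OF T \<open>0 < n\<close>] unfolding spectrum_def by auto
  then obtain v where v: "v \<in> carrier_vec n" "v \<noteq> 0\<^sub>v n" and T_eig: "?T *\<^sub>v v = lam \<cdot>\<^sub>v v"
    unfolding eigenvalue_def eigenvector_def using T by auto
  have eig: "lam \<cdot>\<^sub>v v = G *\<^sub>v v + of_real \<mu> \<cdot>\<^sub>v ((KQ - K) *\<^sub>v v) + (lam * of_real \<mu>) \<cdot>\<^sub>v (K *\<^sub>v v)"
    by (rule eigen_equation_of_splitting[OF carrier inverse v(1) T_eig])
  have "cmod lam \<le> \<mu> * entry_norm1 (KQ - K) + cmod lam * \<mu> * entry_norm1 K"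
    by (rule eigenvalue_bound_block_lower_triangular[OF carrier(3) minus_carrier_mat[OF carrier(1)] carrier(1)
          v \<open>0 \<le> \<mu>\<close> G_blk block_lower_minus[OF carrier(2,1) KQ_blk K_blk] K_blk eig])
  also have "cmod lam * \<mu> * entry_norm1 K \<le> cmod lam / 2"
    using mult_left_mono[OF small norm_ge_zero[of lam]] by (simp add: mult.assoc)
  finally show ?thesis
    using radius by simp
qed

lemma spectral_radius_T_S_le:
  assumes "0 < L" "0 < M" "0 < N" and QD: "QD \<in> carrier_mat M M" and A: "A \<in> carrier_mat N N"
    and "0 \<le> \<mu>" and small: "\<mu> * entry_norm1 (diag_kron L QD A) \<le> 1/2"
    and inv: "invertible_mat (P_hat L M N QD A \<mu>)"
  shows "spectral_radius (T_S L M N \<tau> QD A \<mu>)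
           \<le> 2 * \<mu> * entry_norm1 (diag_kron L (coll_Q M \<tau>) A - diag_kron L QD A)"
proof -
  define n where "n = L*M*N"
  define H where "H = kron (N_mat M) (1\<^sub>m N)"
  define G where "G = kron (E_mat L) H"
  define P where "P = P_hat L M N QD A \<mu>"
  have Q: "coll_Q M \<tau> \<in> carrier_mat M M"
    by (simp add: coll_Q_def)
  have H: "H \<in> carrier_mat (M*N) (M*N)"
    by (auto simp: H_def N_mat_def intro!: kron_carrier_mat)
  have carrier: "diag_kron L QD A \<in> carrier_mat n n" "diag_kron L (coll_Q M \<tau>) A \<in> carrier_mat n n"
    "G \<in> carrier_mat n n"
    using diag_kron_carrier_mat[OF QD A] diag_kron_carrier_mat[OF Q A] kron_carrier_mat[OF _ H, of "E_mat L" L L]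
    by (auto simp: n_def G_def E_mat_def mult.assoc)
  have P_eq: "P = 1\<^sub>m n - of_real \<mu> \<cdot>\<^sub>m diag_kron L QD A"
    by (simp add: P_def P_hat_def diag_kron_def n_def)
  then have P: "P \<in> carrier_mat n n"
    using carrier(1) by (auto intro: minus_carrier_mat)
  have "P * the (mat_inverse P) = 1\<^sub>m n" and inverse_carrier: "the (mat_inverse P) \<in> carrier_mat n n"
    using the_mat_inverse[OF P inv[folded P_def]] by auto
  then have inverse: "(1\<^sub>m n - of_real \<mu> \<cdot>\<^sub>m diag_kron L QD A) * the (mat_inverse P) = 1\<^sub>m n"
    by (simp add: P_eq)
  have T_eq: "T_S L M N \<tau> QD A \<mu>
      = 1\<^sub>m n - the (mat_inverse P) * (1\<^sub>m n - of_real \<mu> \<cdot>\<^sub>m diag_kron L (coll_Q M \<tau>) A - G)"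
    by (simp add: T_S_def C_mat_def P_def n_def diag_kron_def G_def H_def)
  have "0 < n"
    using assms(1-3) by (simp add: n_def)
  have "block_strictly_lower (\<lambda>i. i div (M*N)) G"
    unfolding G_def by (rule block_strictly_lower_kron_E_mat[OF H])
  then show ?thesis
    unfolding T_eq
    by (rule spectral_radius_splitting_le[OF carrier inverse_carrier \<open>0 < n\<close> \<open>0 \<le> \<mu>\<close> small inverse _
          block_lower_diag_kron[OF Q A] block_lower_diag_kron[OF QD A]])
qed

lemma le_powr_inverse_of_le_one:
  fixes x :: real
  assumes "0 < x" "x \<le> 1" "0 < L"
  shows "x \<le> x powr (1 / real L)"
proof -
  have "x powr 1 \<le> x powr (1 / real L)"
    by (rule powr_mono') (use assms in auto)
  then show ?thesis
    using \<open>0 < x\<close> by simp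
qed

theorem lemma1:
  fixes L M N :: nat and \<tau> :: "nat \<Rightarrow> real" and QD :: "real mat" and A :: "complex mat"
  assumes "0 < L" and "0 < M" and "0 < N"
    and "gauss_radau_right M \<tau>"
    and "QD \<in> carrier_mat M M" and "\<forall>i j. i < j \<and> j < M \<longrightarrow> QD $$ (i,j) = 0"
    and "A \<in> carrier_mat N N"
  shows "\<exists>\<mu>s > 0. \<exists>c > 0. \<forall>\<mu>::real. 0 < \<mu> \<and> \<mu> < \<mu>s \<longrightarrow>
           invertible_mat (P_hat L M N QD A \<mu>) \<longrightarrow>
           spectral_radius (T_S L M N \<tau> QD A \<mu>) \<le> c * \<mu> powr (1 / real L)"
proof -
  define k where "k = entry_norm1 (diag_kron L QD A)"
  define r where "r = entry_norm1 (diag_kron L (coll_Q M \<tau>) A - diag_kron L QD A)"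
  define \<mu>s where "\<mu>s = min 1 (1 / (2 * k + 1))"
  have "k \<ge> 0" "r \<ge> 0"
    by (simp_all add: k_def r_def entry_norm1_nonneg)
  have "spectral_radius (T_S L M N \<tau> QD A \<mu>) \<le> (2 * r + 1) * \<mu> powr (1 / real L)"
    if "0 < \<mu>" "\<mu> < \<mu>s" and inv: "invertible_mat (P_hat L M N QD A \<mu>)" for \<mu>
  proof -
    have "\<mu> * (2 * k + 1) < 1"
      using that \<open>k \<ge> 0\<close> by (simp add: \<mu>s_def field_simps)
    then have "\<mu> * k \<le> 1/2"
      using \<open>0 < \<mu>\<close> by (simp add: algebra_simps)
    then have "spectral_radius (T_S L M N \<tau> QD A \<mu>) \<le> 2 * r * \<mu>"
      using spectral_radius_T_S_le[OF assms(1-3,5,7) _ _ inv] \<open>0 < \<mu>\<close> by (simp add: k_def r_def ac_simps)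
    also have "\<dots> \<le> (2 * r + 1) * \<mu> powr (1 / real L)"
      using le_powr_inverse_of_le_one[of \<mu> L] that \<open>0 < L\<close> \<open>r \<ge> 0\<close>
      by (intro mult_mono) (auto simp: \<mu>s_def)
    finally show ?thesis .
  qed
  moreover have "\<mu>s > 0" "2 * r + 1 > 0"
    using \<open>k \<ge> 0\<close> \<open>r \<ge> 0\<close> by (simp_all add: \<mu>s_def)
  ultimately show ?thesis
    by blast
qed

end
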